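(* Let $K$ be a planar knotoid diagram, $s$ a state of $K$, and $G^s_K$ the associated punctured marked ribbon graph decorated with signs and arrows. Let $e_\pm$ be the numbers of positive/negative edges and $b_e=B/A$ for positive, $b_e=A/B$ for negative edges. Then \[\langle K\rangle^\ell=\frac{A^{e_+}B^{e_-}}{d}\,R^\ell_{G^s_K}(1,\mathbf b,d),\qquad \langle K\rangle^\ell_A=\frac{A^{e_+-e_-}}{-A^2-A^{-2}}\,R^\ell_{G^s_K}\big(1,\mathbf b|_{B=A^{-1}},-A^2-A^{-2}\big).\]
   Context: Write $I=[0,1]$. A planar knotoid diagram is an immersion of $I$ into $S^2$ whose only singularities are finitely many transversal double points with over/under information, together with a marked point $\infty$ (the puncture) in the complement of the diagram; tail = image of $0$, head = image of $1$, oriented tail to head. Oriented state expansion: at each crossing there are two smoothings, the Kauffman $A$-smoothing and $B$-smoothing. Exactly one is compatible with the orientation (oriented smoothing); the other (disoriented) reverses the orientation along its arcs, and at each of the two points of reversal an arrow is placed, oriented counterclockwise around the former crossing. A state $s$ is a choice of smoothing at every crossing; it is a disjoint union of embedded loops and one embedded arc in $S^2\setminus\{\infty\}$, decorated with arrows. Reduction: isotopy in $S^2\setminus\{\infty\}$ and cancellation of two consecutive arrows pointing in the same direction. In fully reduced form, loops carry no arrows, and the arc is $\Lambda_i$ or $\Lambda_i'$ (an arc with $2i$ alternating arrows whose first arrow from the tail points along, respectively against, the orientation at the tail). Let $\ell(s)$ be the number of loops of $s$ separating the arc from the puncture, and $m(s)$ the number of remaining loops. The loop arrow bracket is \[\langle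 K\rangle^\ell=\sum_s A^{a(s)}B^{b(s)}d^{m(s)}\,(\Lambda^{(\prime)}_{i(s)})^{\ell(s)},\] where $a(s),b(s)$ are the numbers of $A$-/$B$-smoothings and each symbol $(\Lambda_i)^\ell$, $(\Lambda_i')^\ell$ is a separate commuting formal variable, with $(\Lambda_0)^0=1$. $\langle K\rangle^\ell_A$ is its specialization at $B=A^{-1}$, $d=-A^2-A^{-2}$. A ribbon graph is a surface that is a union of vertex discs and edge discs, each edge disc meeting vertex discs in exactly two disjoint segments (attaching arcs); a marked vertex carries a marking (a boundary point away from attaching arcs) and an orientation of its boundary. The punctured marked ribbon graph $G^s_K$, embedded in $S^2$: vertices are discs bounded by the state components of $s$, the arc component giving the marked vertex whose boundary is the arc closed up through the marking joining its endpoints, oriented tail to head. Edges correspond to crossings: at each smoothing site a small planar ribbon joins the two opposite arcs of the smoothing. Sign $+$ if $s$ uses the $A$-smoothing there, $-$ otherwise. Each edge gets two arrows running counterclockwise: if the smoothing is oriented, one on each edge boundary arc not meeting a vertex; if disoriented, one on each attaching arc. The puncture $\infty$ is kept in place. For a spanning subgraph $F\subseteq E(G^s_K)$ (a subsurface of $S^2$ avoiding $\infty$), $k(F)$ is its number of components and $\mathrm{bc}(F)$ its number of boundary components. Let $\ell(F)$ be the number of non-marked boundary components that separate the marked boundary component from $\infty$, and let the marked boundary component, after cancelling consecutive equally-directed arrows and read from the marking along the orientation, be $\Lambda_{i}$ or $\Lambda_i'$. The loop arrow Bollobás–Riordan polynomial is \[R^\ell_G(a,\mathbf b,c)=\sum_{F\subseteq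 E(G)}a^{k(F)}\Big(\prod_{e\in F}b_e\Big)c^{\mathrm{bc}(F)-\ell(F)}\big(\Lambda^{(\prime)}_{i(F)}\big)^{\ell(F)}.\] *)

theory Defs
  imports Main
begin

text \<open>
Crossings are 0..<n.  Each crossing has four ports 0,1,2,3 in counterclockwise
order (w.r.t. the fixed orientation of S^2).  The oriented arc (tail to head)
passes the crossings 2n times; visit k (k < 2n) is  vis k = (c, p): it enters
crossing c through port p and leaves through the opposite port (p+2) mod 4;
ovr k says whether visit k is the over-strand.  The arc is cut by the crossings
into the segments 0..2n: segment 0 starts at the tail, segment j (1<=j<=2n)
starts at the exit port of visit j-1, segment j (j<2n) ends at the entry port of
visit j, segment 2n ends at the head.  The rotation system at the crossings
determines the cellular embedding of the underlying graph; planarity (sphere)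
is the Euler condition #faces = n+1.  Faces are described by "nodes":
a corner Corner c k is the sector at crossing c between ports k and k+1,
and Side j b is the left (b = True) / right (b = False) side of segment j.
The puncture is a node, i.e. lies in the face containing that node.
\<close>

datatype node = Side nat bool | Corner nat nat

record kd =
  ncr :: nat
  vis :: "nat \<Rightarrow> nat \<times> nat"
  ovr :: "nat \<Rightarrow> bool"
  pct :: node

definition conn :: "('b \<Rightarrow> 'b \<Rightarrow> bool) \<Rightarrow> 'b \<Rightarrow> 'b \<Rightarrow> bool" where
  "conn R = (\<lambda>x y. R x y \<or> R y x)\<^sup>*\<^sup>*"

definition nodes :: "kd \<Rightarrow> node set" where
  "nodes K = {Side j b | j b. j \<le> 2 * ncr K} \<union> {Corner c k | c k. c < ncr K \<and> k < 4}"

text \<open>Incidences between segment sides and corners (and around tail/head).\<close>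
definition faceadj :: "kd \<Rightarrow> node \<Rightarrow> node \<Rightarrow> bool" where
  "faceadj K u v \<longleftrightarrow>
     (\<exists>j. 1 \<le> j \<and> j \<le> 2 * ncr K \<and>
        (let c = fst (vis K (j - 1)); ex = (snd (vis K (j - 1)) + 2) mod 4 in
          (u = Side j True \<and> v = Corner c ex) \<or> (u = Side j False \<and> v = Corner c ((ex + 3) mod 4)))) \<or>
     (\<exists>j. j < 2 * ncr K \<and>
        (let c = fst (vis K j); i = snd (vis K j) in
          (u = Side j True \<and> v = Corner c ((i + 3) mod 4)) \<or> (u = Side j False \<and> v = Corner c i))) \<or>
     (u = Side 0 True \<and> v = Side 0 False) \<or>
     (u = Side (2 * ncr K) True \<and> v = Side (2 * ncr K) False)"

definition faces :: "kd \<Rightarrow> node set set" where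
  "faces K = (\<lambda>u. {v \<in> nodes K. conn (faceadj K) u v}) ` nodes K"

definition valid_kd :: "kd \<Rightarrow> bool" where
  "valid_kd K \<longleftrightarrow>
     (\<forall>k < 2 * ncr K. fst (vis K k) < ncr K \<and> snd (vis K k) < 4) \<and>
     (\<forall>c < ncr K. card {k. k < 2 * ncr K \<and> fst (vis K k) = c} = 2) \<and>
     (\<forall>k < 2 * ncr K. \<forall>k' < 2 * ncr K. k \<noteq> k' \<and> fst (vis K k) = fst (vis K k') \<longrightarrow>
         (snd (vis K k') = (snd (vis K k) + 1) mod 4 \<or> snd (vis K k) = (snd (vis K k') + 1) mod 4) \<and>
         (ovr K k \<longleftrightarrow> \<not> ovr K k')) \<and>
     card (faces K) = ncr K + 1 \<and>
     pct K \<in> nodes K"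

definition isentry :: "kd \<Rightarrow> nat \<Rightarrow> nat \<Rightarrow> bool" where
  "isentry K c x \<longleftrightarrow> (\<exists>k < 2 * ncr K. vis K k = (c, x))"

text \<open>The segment incident with port x of crossing c.\<close>
definition portseg :: "kd \<Rightarrow> nat \<Rightarrow> nat \<Rightarrow> nat" where
  "portseg K c x =
     (if isentry K c x then (LEAST k. k < 2 * ncr K \<and> vis K k = (c, x))
      else Suc (LEAST k. k < 2 * ncr K \<and> vis K k = (c, (x + 2) mod 4)))"

text \<open>An entry port of the over-strand at crossing c.\<close>
definition overport :: "kd \<Rightarrow> nat \<Rightarrow> nat" where
  "overport K c = snd (vis K (LEAST k. k < 2 * ncr K \<and> fst (vis K k) = c \<and> ovr K k))"

text \<open>
A curve system is given by  G :: nat => nat set : at crossing c it consists of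
small arcs around the corners k in G c (an arc around corner k joins the ends
of the segments at ports k and k+1), together with all segments.  The
arrow marker ar c says that the two small arcs at c carry arrows, each
oriented counterclockwise around the crossing.
\<close>

definition cadj :: "kd \<Rightarrow> (nat \<Rightarrow> nat set) \<Rightarrow> nat \<Rightarrow> nat \<Rightarrow> bool" where
  "cadj K G j j' \<longleftrightarrow> (\<exists>c < ncr K. \<exists>k \<in> G c.
      (j = portseg K c k \<and> j' = portseg K c ((k + 1) mod 4)))"

definition ccomp :: "kd \<Rightarrow> (nat \<Rightarrow> nat set) \<Rightarrow> nat \<Rightarrow> nat set" where
  "ccomp K G j = {j'. j' \<le> 2 * ncr K \<and> conn (cadj K G) j j'}"

definition ccomps :: "kd \<Rightarrow> (nat \<Rightarrow> nat set) \<Rightarrow> nat set set" where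
  "ccomps K G = ccomp K G ` {..2 * ncr K}"

text \<open>The component containing the tail (the arc); the others are loops.\<close>
definition cloops :: "kd \<Rightarrow> (nat \<Rightarrow> nat set) \<Rightarrow> nat set set" where
  "cloops K G = ccomps K G - {ccomp K G 0}"

text \<open>Adjacency of face sectors in the complement of a single loop Lp.\<close>
definition regadj :: "kd \<Rightarrow> (nat \<Rightarrow> nat set) \<Rightarrow> nat set \<Rightarrow> node \<Rightarrow> node \<Rightarrow> bool" where
  "regadj K G Lp u v \<longleftrightarrow>
     faceadj K u v \<or>
     (\<exists>j \<le> 2 * ncr K. j \<notin> Lp \<and> u = Side j True \<and> v = Side j False) \<or>
     (\<exists>c < ncr K. \<exists>k < 4. \<exists>k' < 4. u = Corner c k \<and> v = Corner c k' \<and>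
        k \<notin> G c \<and> (k' \<notin> G c \<or> portseg K c k' \<notin> Lp))"

definition separates :: "kd \<Rightarrow> (nat \<Rightarrow> nat set) \<Rightarrow> nat set \<Rightarrow> bool" where
  "separates K G Lp \<longleftrightarrow> \<not> conn (regadj K G Lp) (pct K) (Side 0 True)"

definition ellc :: "kd \<Rightarrow> (nat \<Rightarrow> nat set) \<Rightarrow> nat" where
  "ellc K G = card {Lp \<in> cloops K G. separates K G Lp}"

definition mc :: "kd \<Rightarrow> (nat \<Rightarrow> nat set) \<Rightarrow> nat" where
  "mc K G = card (cloops K G) - ellc K G"

text \<open>End of segment j reached travelling forwards (f) or backwards (\<not> f).\<close>
definition endport :: "kd \<Rightarrow> nat \<Rightarrow> bool \<Rightarrow> (nat \<times> nat) option" where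
  "endport K j f =
     (if f then (if j = 2 * ncr K then None else Some (vis K j))
      else (if j = 0 then None
            else Some (fst (vis K (j - 1)), (snd (vis K (j - 1)) + 2) mod 4)))"

text \<open>Traversal of the arc component from the tail; records for every arrow met
whether it points along (True) or against (False) the direction of travel.\<close>
fun walk :: "kd \<Rightarrow> (nat \<Rightarrow> nat set) \<Rightarrow> (nat \<Rightarrow> bool) \<Rightarrow> nat \<Rightarrow> nat \<Rightarrow> bool \<Rightarrow> bool list" where
  "walk K G ar 0 j f = []"
| "walk K G ar (Suc fuel) j f =
     (case endport K j f of
        None \<Rightarrow> []
      | Some (c, x) \<Rightarrow>
          (let ccw = (x \<in> G c);
               y = (if ccw then (x + 1) mod 4 else (x + 3) mod 4)
           in (if ar c then [ccw] else []) @
              walk K G ar fuel (portseg K c y) (\<not> isentry K c y)))"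

text \<open>Cancellation of consecutive equally directed arrows.\<close>
fun reduce :: "bool list \<Rightarrow> bool list" where
  "reduce [] = []"
| "reduce (x # xs) = (case reduce xs of [] \<Rightarrow> [x] | y # ys \<Rightarrow> (if x = y then ys else x # y # ys))"

text \<open>Reduced arrow word of the arc component, read from the tail: the alternating
word of length 2i starting with True is Lambda_i, starting with False is Lambda_i'.\<close>
definition arcword :: "kd \<Rightarrow> (nat \<Rightarrow> nat set) \<Rightarrow> (nat \<Rightarrow> bool) \<Rightarrow> bool list" where
  "arcword K G ar = reduce (walk K G ar (2 * ncr K + 2) 0 True)"

text \<open>Oriented / disoriented local picture: a small arc joining two entry or two
exit ports reverses orientation.\<close>
definition disor :: "kd \<Rightarrow> (nat \<Rightarrow> nat set) \<Rightarrow> nat \<Rightarrow> bool" where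
  "disor K G c \<longleftrightarrow> (\<exists>k \<in> G c. isentry K c k = isentry K c ((k + 1) mod 4))"

text \<open>A state is the set S \<subseteq> {..<n} of crossings with the A-smoothing.
The A-regions at c are the corners p, p+2 (p an over port), swept when rotating
the over-strand counterclockwise; the A-smoothing joins them, so its arcs go around
corners p+1, p+3.\<close>
definition sarcs :: "kd \<Rightarrow> nat set \<Rightarrow> nat \<Rightarrow> nat set" where
  "sarcs K S c = (let p = overport K c in
     if c \<in> S then {(p + 1) mod 4, (p + 3) mod 4} else {p, (p + 2) mod 4})"

text \<open>The values of the formal variables (Lambda)^l are given by Lam w l, where w is
the reduced arrow word.\<close>
definition loop_arrow_bracket ::
  "kd \<Rightarrow> 'a::field \<Rightarrow> 'a \<Rightarrow> 'a \<Rightarrow> (bool list \<Rightarrow> nat \<Rightarrow> 'a) \<Rightarrow> 'a" where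
  "loop_arrow_bracket K A B d Lam =
     (\<Sum>S \<in> Pow {..<ncr K}.
        A ^ card S * B ^ (ncr K - card S) * d ^ mc K (sarcs K S)
        * Lam (arcword K (sarcs K S) (disor K (sarcs K S))) (ellc K (sarcs K S)))"

definition loop_arrow_bracket_A :: "kd \<Rightarrow> 'a::field \<Rightarrow> (bool list \<Rightarrow> nat \<Rightarrow> 'a) \<Rightarrow> 'a" where
  "loop_arrow_bracket_A K A Lam = loop_arrow_bracket K A (inverse A) (- (A ^ 2) - inverse (A ^ 2)) Lam"

text \<open>
Vertices of G^s_K: the state components of s (vertex discs), edges: the crossings,
edge e positive iff e \<in> S.  At crossing c the vertex boundary contains the two
attaching arcs (the smoothing arcs of s, around corners sarcs K S c); the edge
ribbon spans the channel between them, so its two boundary arcs not meeting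
vertices run around the remaining two corners.  Arrows (counterclockwise around c):
on the attaching arcs if s is disoriented at c, on the free edge boundary arcs if s
is oriented at c.  For a spanning subgraph F, the boundary of the subsurface consists
of the segments, the attaching arcs of edges not in F and the free boundary arcs of
the edges in F.
\<close>

definition rb_pieces :: "kd \<Rightarrow> nat set \<Rightarrow> nat set \<Rightarrow> nat \<Rightarrow> nat set" where
  "rb_pieces K S F c = (if c \<in> F then {..<4} - sarcs K S c else sarcs K S c)"

definition rb_arrows :: "kd \<Rightarrow> nat set \<Rightarrow> nat set \<Rightarrow> nat \<Rightarrow> bool" where
  "rb_arrows K S F c = (if c \<in> F then \<not> disor K (sarcs K S) c else disor K (sarcs K S) c)"

text \<open>Components of the subsurface: vertices glued along the edges of F.\<close>
definition rb_adj :: "kd \<Rightarrow> nat set \<Rightarrow> nat set \<Rightarrow> nat \<Rightarrow> nat \<Rightarrow> bool" where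
  "rb_adj K S F j j' \<longleftrightarrow> cadj K (sarcs K S) j j' \<or>
     (\<exists>c \<in> F. c < ncr K \<and> (\<exists>x<4. \<exists>y<4. j = portseg K c x \<and> j' = portseg K c y))"

definition rb_k :: "kd \<Rightarrow> nat set \<Rightarrow> nat set \<Rightarrow> nat" where
  "rb_k K S F = card ((\<lambda>j. {j'. j' \<le> 2 * ncr K \<and> conn (rb_adj K S F) j j'}) ` {..2 * ncr K})"

definition rb_bc :: "kd \<Rightarrow> nat set \<Rightarrow> nat set \<Rightarrow> nat" where
  "rb_bc K S F = card (ccomps K (rb_pieces K S F))"

definition rb_ell :: "kd \<Rightarrow> nat set \<Rightarrow> nat set \<Rightarrow> nat" where
  "rb_ell K S F = ellc K (rb_pieces K S F)"

definition rb_word :: "kd \<Rightarrow> nat set \<Rightarrow> nat set \<Rightarrow> bool list" where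
  "rb_word K S F = arcword K (rb_pieces K S F) (rb_arrows K S F)"

definition loop_arrow_BR ::
  "kd \<Rightarrow> nat set \<Rightarrow> 'a::field \<Rightarrow> (nat \<Rightarrow> 'a) \<Rightarrow> 'a \<Rightarrow> (bool list \<Rightarrow> nat \<Rightarrow> 'a) \<Rightarrow> 'a" where
  "loop_arrow_BR K S a b cc Lam =
     (\<Sum>F \<in> Pow {..<ncr K}.
        a ^ rb_k K S F * (\<Prod>e\<in>F. b e) * cc ^ (rb_bc K S F - rb_ell K S F)
        * Lam (rb_word K S F) (rb_ell K S F))"

end

theory Submission imports Defs begin

text \<open>
A spanning subgraph F of the ribbon graph of the state S is itself a state, namely the
symmetric difference S \<triangle> F: at a crossing outside F its boundary follows the smoothing
arcs of S, at a crossing in F the free boundary arcs of the edge, which are the arcs of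
the opposite smoothing. Switching the smoothing at a crossing also switches oriented and
disoriented, so the arrows agree as well. Hence the boundary of F is the state S \<triangle> F with
its arrows, one of whose components is the arc, so bc(F) - \<ell>(F) = m(S \<triangle> F) + 1; and the
monomial of S \<triangle> F is A^{e+} B^{e-} times the product of the b_e over F. Summing over the
bijection F \<mapsto> S \<triangle> F gives the first identity; the second is its instance B = A\<inverse>.
\<close>

lemma
  assumes "valid_kd K"
  shows valid_kd_vis_bounds: "k < 2 * ncr K \<Longrightarrow> fst (vis K k) < ncr K \<and> snd (vis K k) < 4"
    and valid_kd_two_visits: "c < ncr K \<Longrightarrow> card {k. k < 2 * ncr K \<and> fst (vis K k) = c} = 2"
    and valid_kd_visits_meet:
      "\<lbrakk>k < 2 * ncr K; k' < 2 * ncr K; k \<noteq> k'; fst (vis K k) = fst (vis K k')\<rbrakk> \<Longrightarrow>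
         (snd (vis K k') = (snd (vis K k) + 1) mod 4 \<or> snd (vis K k) = (snd (vis K k') + 1) mod 4) \<and>
         (ovr K k \<longleftrightarrow> \<not> ovr K k')"
  using assms unfolding valid_kd_def by blast+

lemma crossing_visits:
  assumes "valid_kd K" "c < ncr K"
  obtains k k' where "k < 2 * ncr K" "k' < 2 * ncr K" "k \<noteq> k'"
    "fst (vis K k) = c" "fst (vis K k') = c"
    "\<And>j. j < 2 * ncr K \<Longrightarrow> fst (vis K j) = c \<Longrightarrow> j = k \<or> j = k'"
proof -
  obtain k k' where "{k. k < 2 * ncr K \<and> fst (vis K k) = c} = {k, k'}" "k \<noteq> k'"
    using valid_kd_two_visits[OF assms] by (auto simp: card_2_iff)
  then show ?thesis using that by blast
qed

lemma entry_ports: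
  assumes "valid_kd K" "c < ncr K"
  obtains q where "q < 4" "\<And>x. isentry K c x \<longleftrightarrow> x = q \<or> x = (q + 1) mod 4"
proof -
  obtain k k' where k: "k < 2 * ncr K" "k' < 2 * ncr K" "k \<noteq> k'"
    "fst (vis K k) = c" "fst (vis K k') = c"
    "\<And>j. j < 2 * ncr K \<Longrightarrow> fst (vis K j) = c \<Longrightarrow> j = k \<or> j = k'"
    using crossing_visits[OF assms] by blast
  have vk: "vis K k = (c, snd (vis K k))" "vis K k' = (c, snd (vis K k'))"
    using k(4,5) by (simp_all add: prod_eq_iff)
  have entry: "isentry K c x \<longleftrightarrow> x = snd (vis K k) \<or> x = snd (vis K k')" for x
    unfolding isentry_def using k(1,2,6) vk by (metis fst_conv snd_conv)
  have bounds: "snd (vis K k) < 4" "snd (vis K k') < 4"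
    using valid_kd_vis_bounds[OF assms(1)] k(1,2) by blast+
  have "snd (vis K k') = (snd (vis K k) + 1) mod 4 \<or> snd (vis K k) = (snd (vis K k') + 1) mod 4"
    using valid_kd_visits_meet[OF assms(1) k(1-3)] k(4,5) by simp
  then show ?thesis
  proof
    assume "snd (vis K k') = (snd (vis K k) + 1) mod 4"
    then show ?thesis using that[of "snd (vis K k)"] bounds(1) by (simp add: entry)
  next
    assume "snd (vis K k) = (snd (vis K k') + 1) mod 4"
    then show ?thesis using that[of "snd (vis K k')"] bounds(2) by (simp add: entry disj_commute)
  qed
qed

lemma overport_less_4:
  assumes "valid_kd K" "c < ncr K"
  shows "overport K c < 4"
proof -
  obtain k k' where k: "k < 2 * ncr K" "k' < 2 * ncr K" "k \<noteq> k'"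
    "fst (vis K k) = c" "fst (vis K k') = c"
    using crossing_visits[OF assms] by blast
  then have "\<exists>j. j < 2 * ncr K \<and> fst (vis K j) = c \<and> ovr K j"
    using valid_kd_visits_meet[OF assms(1) k(1-3)] by metis
  then have "(LEAST j. j < 2 * ncr K \<and> fst (vis K j) = c \<and> ovr K j) < 2 * ncr K"
    by (metis (mono_tags, lifting) LeastI)
  then show ?thesis
    unfolding overport_def using valid_kd_vis_bounds[OF assms(1)] by blast
qed

lemma less_4_cases:
  assumes "(p::nat) < 4"
  obtains "p = 0" | "p = 1" | "p = 2" | "p = 3"
  using assms by linarith

lemma sarcs_switch:
  assumes "valid_kd K" "c < ncr K" "c \<in> T \<longleftrightarrow> c \<notin> S"
  shows "sarcs K T c = {..<4} - sarcs K S c"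
proof -
  have ports: "{..<4::nat} = {0, 1, 2, 3}" by auto
  show ?thesis
    using overport_less_4[OF assms(1,2)] assms(3)
    by (cases rule: less_4_cases) (auto simp: sarcs_def ports)
qed

lemma disor_sarcs_switch:
  assumes "valid_kd K" "c < ncr K" "c \<in> T \<longleftrightarrow> c \<notin> S"
  shows "disor K (sarcs K T) c \<longleftrightarrow> \<not> disor K (sarcs K S) c"
proof -
  obtain q where q: "q < 4" "\<And>x. isentry K c x \<longleftrightarrow> x = q \<or> x = (q + 1) mod 4"
    using entry_ports[OF assms(1,2)] by blast
  have p: "overport K c < 4"
    using overport_less_4[OF assms(1,2)] .
  show ?thesis
    unfolding disor_def q(2) using assms(3)
    by (cases rule: less_4_cases[OF p]; cases rule: less_4_cases[OF q(1)]) (auto simp: sarcs_def)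
qed

lemma rb_pieces_sym_diff:
  assumes "valid_kd K" "F \<subseteq> {..<ncr K}"
  shows "rb_pieces K S F = sarcs K (sym_diff S F)"
proof
  fix c
  show "rb_pieces K S F c = sarcs K (sym_diff S F) c"
  proof (cases "c \<in> F")
    case True
    then show ?thesis
      using sarcs_switch[OF assms(1), of c "sym_diff S F" S] assms(2)
      unfolding rb_pieces_def by auto
  next
    case False
    then show ?thesis unfolding rb_pieces_def sarcs_def by auto
  qed
qed

lemma rb_arrows_sym_diff:
  assumes "valid_kd K" "F \<subseteq> {..<ncr K}"
  shows "rb_arrows K S F = disor K (sarcs K (sym_diff S F))"
proof
  fix c
  show "rb_arrows K S F c = disor K (sarcs K (sym_diff S F)) c"
  proof (cases "c \<in> F")
    case True
    then show ?thesis
      using disor_sarcs_switch[OF assms(1), of c "sym_diff S F" S] assms(2)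
      unfolding rb_arrows_def by auto
  next
    case False
    then have "sarcs K (sym_diff S F) c = sarcs K S c" unfolding sarcs_def by auto
    with False show ?thesis unfolding rb_arrows_def disor_def by simp
  qed
qed

lemma card_ccomps_minus_ellc:
  "card (ccomps K G) - ellc K G = Suc (mc K G)"
proof -
  have fin: "finite (ccomps K G)" and arc: "ccomp K G 0 \<in> ccomps K G"
    unfolding ccomps_def by simp_all
  then have loops: "card (cloops K G) = card (ccomps K G) - 1"
    unfolding cloops_def by (simp add: card_Diff_singleton)
  moreover have "card (ccomps K G) \<ge> 1"
    using fin arc by (auto simp: Suc_le_eq card_gt_0_iff)
  moreover have "ellc K G \<le> card (cloops K G)"
    unfolding ellc_def cloops_def using fin by (intro card_mono) auto
  ultimately show ?thesis unfolding mc_def by linarith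
qed

lemma sum_Pow_sym_diff:
  assumes "S \<subseteq> U"
  shows "(\<Sum>T \<in> Pow U. g T) = (\<Sum>F \<in> Pow U. g (sym_diff S F))"
proof -
  have involution: "sym_diff S (sym_diff S F) = F" for F by blast
  show ?thesis
    by (rule sum.reindex_bij_witness[of _ "sym_diff S" "sym_diff S"]) (use assms in \<open>auto simp: involution\<close>)
qed

lemma monomial_sym_diff:
  fixes A B :: "'a::field"
  assumes "A \<noteq> 0" "B \<noteq> 0" "S \<subseteq> {..<n}" "F \<subseteq> {..<n}"
  shows "A ^ card (sym_diff S F) * B ^ (n - card (sym_diff S F))
       = A ^ card S * B ^ (n - card S) * (\<Prod>e\<in>F. if e \<in> S then B / A else A / B)"
proof -
  have fin: "finite S" "finite F"
    using assms(3,4) by (auto intro: finite_subset)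
  define s a b where "s = card (S - F)" and "a = card (F \<inter> S)" and "b = card (F - S)"
  have card_S: "card S = s + a"
    unfolding s_def a_def using card_Int_Diff[OF fin(1), of F] by (simp add: Int_commute)
  have card_D: "card (sym_diff S F) = s + b"
    unfolding s_def b_def using fin by (intro card_Un_disjoint) auto
  have "card S + b = card (S \<union> (F - S))"
    unfolding b_def using fin by (subst card_Un_disjoint) auto
  also have "\<dots> \<le> n"
    using card_mono[of "{..<n}" "S \<union> (F - S)"] assms(3,4) by auto
  finally have bound: "card S + b \<le> n" .
  define m where "m = n - card S - b"
  have m: "n - (s + a) = m + b" "n - (s + b) = m + a"
    unfolding m_def using bound card_S card_D by linarith+
  have prod: "(\<Prod>e\<in>F. if e \<in> S then B / A else A / B) = (B / A) ^ a * (A / B) ^ b"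
    unfolding a_def b_def by (simp add: prod.Int_Diff[OF fin(2), of _ S])
  have AB: "A ^ a * (B / A) ^ a = B ^ a" "B ^ b * (A / B) ^ b = A ^ b"
    using assms(1,2) by (simp_all add: power_divide)
  have "A ^ (s + a) * B ^ (m + b) * ((B / A) ^ a * (A / B) ^ b)
      = A ^ s * B ^ m * ((A ^ a * (B / A) ^ a) * (B ^ b * (A / B) ^ b))"
    by (simp only: power_add mult_ac)
  also have "\<dots> = A ^ (s + b) * B ^ (m + a)"
    unfolding AB by (simp only: power_add mult_ac)
  finally show ?thesis
    unfolding card_S card_D m prod by (rule sym)
qed

lemma loop_arrow_BR_summand_eq_state:
  fixes A B d :: "'a::field"
  assumes "valid_kd K" "S \<subseteq> {..<ncr K}" "F \<subseteq> {..<ncr K}" "A \<noteq> 0" "B \<noteq> 0" "d \<noteq> 0"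
  defines "T \<equiv> sym_diff S F"
  shows "A ^ card T * B ^ (ncr K - card T) * d ^ mc K (sarcs K T)
           * Lam (arcword K (sarcs K T) (disor K (sarcs K T))) (ellc K (sarcs K T))
       = A ^ card S * B ^ (ncr K - card S) / d
           * (1 ^ rb_k K S F * (\<Prod>e\<in>F. if e \<in> S then B / A else A / B)
              * d ^ (rb_bc K S F - rb_ell K S F) * Lam (rb_word K S F) (rb_ell K S F))"
proof -
  have "rb_bc K S F - rb_ell K S F = Suc (mc K (sarcs K T))"
    unfolding rb_bc_def rb_ell_def rb_pieces_sym_diff[OF assms(1,3)] T_def
    by (rule card_ccomps_minus_ellc)
  moreover have "rb_word K S F = arcword K (sarcs K T) (disor K (sarcs K T))"
    unfolding rb_word_def rb_pieces_sym_diff[OF assms(1,3)] rb_arrows_sym_diff[OF assms(1,3)] T_def ..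
  moreover have "rb_ell K S F = ellc K (sarcs K T)"
    unfolding rb_ell_def rb_pieces_sym_diff[OF assms(1,3)] T_def ..
  moreover have "A ^ card T * B ^ (ncr K - card T)
      = A ^ card S * B ^ (ncr K - card S) * (\<Prod>e\<in>F. if e \<in> S then B / A else A / B)"
    unfolding T_def by (rule monomial_sym_diff[OF assms(4,5,2,3)])
  ultimately show ?thesis
    using assms(6) by (simp add: field_simps)
qed

lemma loop_arrow_bracket_eq_BR:
  fixes A B d :: "'a::field"
  assumes "valid_kd K" "S \<subseteq> {..<ncr K}" "A \<noteq> 0" "B \<noteq> 0" "d \<noteq> 0"
  shows "loop_arrow_bracket K A B d Lam =
           A ^ card S * B ^ (ncr K - card S) / d
           * loop_arrow_BR K S 1 (\<lambda>e. if e \<in> S then B / A else A / B) d Lam"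
proof -
  have "loop_arrow_bracket K A B d Lam =
      (\<Sum>F \<in> Pow {..<ncr K}. A ^ card (sym_diff S F) * B ^ (ncr K - card (sym_diff S F))
         * d ^ mc K (sarcs K (sym_diff S F))
         * Lam (arcword K (sarcs K (sym_diff S F)) (disor K (sarcs K (sym_diff S F))))
               (ellc K (sarcs K (sym_diff S F))))"
    unfolding loop_arrow_bracket_def by (rule sum_Pow_sym_diff[OF assms(2)])
  also have "\<dots> = A ^ card S * B ^ (ncr K - card S) / d
           * loop_arrow_BR K S 1 (\<lambda>e. if e \<in> S then B / A else A / B) d Lam"
    unfolding loop_arrow_BR_def sum_distrib_left
    using loop_arrow_BR_summand_eq_state[OF assms(1,2) _ assms(3-5)] by (intro sum.cong) auto
  finally show ?thesis .
qed

theorem mainTheorem13: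
  fixes K :: kd and S :: "nat set" and A B d :: "'a::field" and Lam :: "bool list \<Rightarrow> nat \<Rightarrow> 'a"
  assumes "valid_kd K"
    and "S \<subseteq> {..<ncr K}"
    and "A \<noteq> 0" and "B \<noteq> 0" and "d \<noteq> 0"
    and "Lam [] 0 = 1"
  shows "loop_arrow_bracket K A B d Lam =
           A ^ card S * B ^ (ncr K - card S) / d
           * loop_arrow_BR K S 1 (\<lambda>e. if e \<in> S then B / A else A / B) d Lam
         \<and> (- (A ^ 2) - inverse (A ^ 2) \<noteq> 0 \<longrightarrow>
         loop_arrow_bracket_A K A Lam =
           A powi (int (card S) - int (ncr K - card S)) / (- (A ^ 2) - inverse (A ^ 2))
           * loop_arrow_BR K S 1 (\<lambda>e. if e \<in> S then inverse A / A else A / inverse A)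
               (- (A ^ 2) - inverse (A ^ 2)) Lam)"
proof (intro conjI impI)
  show "loop_arrow_bracket K A B d Lam =
          A ^ card S * B ^ (ncr K - card S) / d
          * loop_arrow_BR K S 1 (\<lambda>e. if e \<in> S then B / A else A / B) d Lam"
    using loop_arrow_bracket_eq_BR assms(1-5) .
next
  assume d: "- (A ^ 2) - inverse (A ^ 2) \<noteq> 0"
  have powi: "A powi (int (card S) - int (ncr K - card S)) = A ^ card S * inverse A ^ (ncr K - card S)"
    using assms(3) by (simp add: power_int_diff power_int_of_nat divide_inverse power_inverse)
  show "loop_arrow_bracket_A K A Lam =
          A powi (int (card S) - int (ncr K - card S)) / (- (A ^ 2) - inverse (A ^ 2))
          * loop_arrow_BR K S 1 (\<lambda>e. if e \<in> S then inverse A / A else A / inverse A)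
              (- (A ^ 2) - inverse (A ^ 2)) Lam"
    unfolding loop_arrow_bracket_A_def powi
    by (rule loop_arrow_bracket_eq_BR) (use assms(1-3) d in auto)
qed

end
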